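(* (a) If $S$ is a discrete semigroup with $S^2\neq S$, then $\ell^1(S)$ is not super weakly amenable. (b) Let $S=\{t,0\}$ with multiplication $t0=0t=t^2=0^2=0$. Then $\ell^1(S)$ is semiweakly amenable but not super weakly amenable.
   Context: $\ell^1(S)$ is the semigroup algebra with convolution $\delta_s*\delta_u=\delta_{su}$; $S^2=\{su:s,u\in S\}$. $\mathcal A^*$ is the dual $\mathcal A$-bimodule ($\langle x,a\cdot f\rangle=\langle xa,f\rangle$, $\langle x,f\cdot a\rangle=\langle ax,f\rangle$). A derivation $D:\mathcal A\to X$ is a bounded linear map with $D(ab)=D(a)\cdot b+a\cdot D(b)$; it is inner if $D(a)=a\cdot x-x\cdot a$ for some $x\in X$. $\mathcal A$ is semiweakly amenable if every derivation $D:\mathcal A\to\mathcal A^*$ with $\langle D(a),b\rangle+\langle D(b),a\rangle=0$ for all $a,b$ is inner. For a continuous homomorphism $\varphi:\mathcal A\to\mathcal B$, $\mathcal B_\varphi$ is $\mathcal B$ with $a\cdot b=\varphi(a)b$, $b\cdot a=b\varphi(a)$, and $\mathcal B_\varphi^*$ its dual bimodule. $\mathcal A$ is super weakly amenable if for every Banach algebra $\mathcal B$, every continuous homomorphism $\varphi:\mathcal A\to\mathcal B$ and every derivation $d:\mathcal A\to\mathcal B_\varphi^*$, $\langle d(a),\varphi(b)\rangle+\langle d(b),\varphi(a)\rangle=0$ for all $a,b$. *)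

theory Defs
  imports "HOL-Analysis.Analysis"
begin

text \<open>Complex Banach algebras are represented set-based: a carrier together with
explicit operations (there is no complex-normed-algebra type class in the library).\<close>

record 'b cbalg =
  bcarrier :: "'b set"
  bzero :: 'b
  badd :: "'b \<Rightarrow> 'b \<Rightarrow> 'b"
  bsmult :: "complex \<Rightarrow> 'b \<Rightarrow> 'b"
  bmult :: "'b \<Rightarrow> 'b \<Rightarrow> 'b"
  bnorm :: "'b \<Rightarrow> real"

definition banach_algebra :: "'b cbalg \<Rightarrow> bool" where
  "banach_algebra B \<longleftrightarrow>
    (let C = bcarrier B; add = badd B; sm = bsmult B; mul = bmult B; nr = bnorm B; z = bzero B in
     z \<in> C \<and>
     (\<forall>x\<in>C. \<forall>y\<in>C. add x y \<in> C \<and> mul x y \<in> C) \<and>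
     (\<forall>c x. x \<in> C \<longrightarrow> sm c x \<in> C) \<and>
     (\<forall>x\<in>C. \<forall>y\<in>C. \<forall>w\<in>C. add (add x y) w = add x (add y w)) \<and>
     (\<forall>x\<in>C. \<forall>y\<in>C. add x y = add y x) \<and>
     (\<forall>x\<in>C. add z x = x) \<and>
     (\<forall>x\<in>C. \<exists>y\<in>C. add x y = z) \<and>
     (\<forall>c x y. x \<in> C \<longrightarrow> y \<in> C \<longrightarrow> sm c (add x y) = add (sm c x) (sm c y)) \<and>
     (\<forall>c d x. x \<in> C \<longrightarrow> sm (c + d) x = add (sm c x) (sm d x)) \<and>
     (\<forall>c d x. x \<in> C \<longrightarrow> sm (c * d) x = sm c (sm d x)) \<and>
     (\<forall>x\<in>C. sm 1 x = x) \<and>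
     (\<forall>x\<in>C. \<forall>y\<in>C. \<forall>w\<in>C. mul (mul x y) w = mul x (mul y w)) \<and>
     (\<forall>x\<in>C. \<forall>y\<in>C. \<forall>w\<in>C. mul x (add y w) = add (mul x y) (mul x w)) \<and>
     (\<forall>x\<in>C. \<forall>y\<in>C. \<forall>w\<in>C. mul (add x y) w = add (mul x w) (mul y w)) \<and>
     (\<forall>c x y. x \<in> C \<longrightarrow> y \<in> C \<longrightarrow>
        mul (sm c x) y = sm c (mul x y) \<and> mul x (sm c y) = sm c (mul x y)) \<and>
     (\<forall>x\<in>C. nr x = 0 \<longleftrightarrow> x = z) \<and>
     (\<forall>x\<in>C. \<forall>y\<in>C. nr (add x y) \<le> nr x + nr y) \<and>
     (\<forall>c x. x \<in> C \<longrightarrow> nr (sm c x) = cmod c * nr x) \<and>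
     (\<forall>x\<in>C. \<forall>y\<in>C. nr (mul x y) \<le> nr x * nr y) \<and>
     (\<forall>X :: nat \<Rightarrow> 'b. (\<forall>n. X n \<in> C) \<longrightarrow>
        (\<forall>e>0. \<exists>N. \<forall>m\<ge>N. \<forall>n\<ge>N. nr (add (X m) (sm (-1) (X n))) < e) \<longrightarrow>
        (\<exists>L\<in>C. \<forall>e>0. \<exists>N. \<forall>n\<ge>N. nr (add (X n) (sm (-1) L)) < e)))"

definition bounded_functional :: "'b cbalg \<Rightarrow> ('b \<Rightarrow> complex) \<Rightarrow> bool" where
  "bounded_functional B F \<longleftrightarrow>
    (\<forall>x\<in>bcarrier B. \<forall>y\<in>bcarrier B. F (badd B x y) = F x + F y) \<and>
    (\<forall>c. \<forall>x\<in>bcarrier B. F (bsmult B c x) = c * F x) \<and>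
    (\<exists>K. \<forall>x\<in>bcarrier B. cmod (F x) \<le> K * bnorm B x)"

definition cont_hom :: "'a cbalg \<Rightarrow> 'b cbalg \<Rightarrow> ('a \<Rightarrow> 'b) \<Rightarrow> bool" where
  "cont_hom A B \<phi> \<longleftrightarrow>
    (\<forall>a\<in>bcarrier A. \<phi> a \<in> bcarrier B) \<and>
    (\<forall>a\<in>bcarrier A. \<forall>b\<in>bcarrier A. \<phi> (badd A a b) = badd B (\<phi> a) (\<phi> b)) \<and>
    (\<forall>c. \<forall>a\<in>bcarrier A. \<phi> (bsmult A c a) = bsmult B c (\<phi> a)) \<and>
    (\<forall>a\<in>bcarrier A. \<forall>b\<in>bcarrier A. \<phi> (bmult A a b) = bmult B (\<phi> a) (\<phi> b)) \<and>
    (\<exists>K. \<forall>a\<in>bcarrier A. bnorm B (\<phi> a) \<le> K * bnorm A a)"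

text \<open>An element of the dual is a functional on the
carrier of B; the module actions are  (F . a)(x) = F(phi(a) x) and (a . F)(x) = F(x phi(a)),
i.e. <x, a.F> = <x.a, F> and <x, F.a> = <a.x, F> in B_phi.\<close>
definition dual_derivation :: "'a cbalg \<Rightarrow> 'b cbalg \<Rightarrow> ('a \<Rightarrow> 'b) \<Rightarrow> ('a \<Rightarrow> 'b \<Rightarrow> complex) \<Rightarrow> bool" where
  "dual_derivation A B \<phi> d \<longleftrightarrow>
    (\<forall>a\<in>bcarrier A. bounded_functional B (d a)) \<and>
    (\<forall>a\<in>bcarrier A. \<forall>b\<in>bcarrier A. \<forall>x\<in>bcarrier B. d (badd A a b) x = d a x + d b x) \<and>
    (\<forall>c. \<forall>a\<in>bcarrier A. \<forall>x\<in>bcarrier B. d (bsmult A c a) x = c * d a x) \<and>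
    (\<exists>K. \<forall>a\<in>bcarrier A. \<forall>x\<in>bcarrier B. cmod (d a x) \<le> K * bnorm A a * bnorm B x) \<and>
    (\<forall>a\<in>bcarrier A. \<forall>b\<in>bcarrier A. \<forall>x\<in>bcarrier B.
        d (bmult A a b) x = d a (bmult B (\<phi> b) x) + d b (bmult B x (\<phi> a)))"

text \<open>Super weak amenability, with the quantified Banach algebras B ranging over
Banach algebras whose elements have type 'b.\<close>
definition super_weakly_amenable :: "'b itself \<Rightarrow> 'a cbalg \<Rightarrow> bool" where
  "super_weakly_amenable (_ :: 'b itself) A \<longleftrightarrow>
    (\<forall>B :: 'b cbalg. \<forall>\<phi> d. banach_algebra B \<longrightarrow> cont_hom A B \<phi> \<longrightarrow> dual_derivation A B \<phi> d \<longrightarrow>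
       (\<forall>a\<in>bcarrier A. \<forall>b\<in>bcarrier A. d a (\<phi> b) + d b (\<phi> a) = 0))"

text \<open>Semiweak amenability: derivations D : A \<rightarrow> A^* with <D a, b> + <D b, a> = 0 are inner.
A^* is (A_id)^*; the inner derivation given by F is  D a = a.F - F.a.\<close>
definition semiweakly_amenable :: "'a cbalg \<Rightarrow> bool" where
  "semiweakly_amenable A \<longleftrightarrow>
    (\<forall>D. dual_derivation A A id D \<longrightarrow>
       (\<forall>a\<in>bcarrier A. \<forall>b\<in>bcarrier A. D a b + D b a = 0) \<longrightarrow>
       (\<exists>F. bounded_functional A F \<and>
          (\<forall>a\<in>bcarrier A. \<forall>y\<in>bcarrier A. D a y = F (bmult A y a) - F (bmult A a y))))"

definition l1_alg :: "('a::semigroup_mult \<Rightarrow> complex) cbalg" where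
  "l1_alg = cbalg.make
     {f. (\<lambda>s. norm (f s)) summable_on UNIV}
     (\<lambda>_. 0)
     (\<lambda>f g s. f s + g s)
     (\<lambda>c f s. c * f s)
     (\<lambda>f g x. infsum (\<lambda>(s, u). f s * g u) {(s, u). s * u = x})
     (\<lambda>f. infsum (\<lambda>s. norm (f s)) UNIV)"

end

theory Submission imports Defs begin

text \<open>
(a) A nonzero bounded functional f on A that vanishes on all products obstructs super weak
amenability: \<open>a \<mapsto> f a\<close> is a continuous homomorphism into \<open>\<complex>\<close> with the zero product,
and \<open>d a x = f a \<cdot> x\<close> is then a derivation with \<open>\<langle>d a, \<phi> a\<rangle> = f a\<^sup>2\<close>.  For \<open>\<ell>\<^sup>1(S)\<close>
take f to be evaluation at a point outside \<open>S\<^sup>2\<close>.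

(b) For \<open>S = {t, 0}\<close> every product of the point masses \<open>\<delta>\<^sub>t, \<delta>\<^sub>0\<close> is \<open>\<delta>\<^sub>0\<close>.  Skewness kills the
diagonal values of D, and the Leibniz rule for \<open>\<delta>\<^sub>0 = \<delta>\<^sub>t * \<delta>\<^sub>t\<close> gives
\<open>\<langle>D \<delta>\<^sub>0, \<delta>\<^sub>0\<rangle> = 2 \<langle>D \<delta>\<^sub>t, \<delta>\<^sub>0\<rangle>\<close>; so D vanishes on all pairs of point masses, hence \<open>D = 0\<close>.
\<close>

lemma l1_alg_simps:
  "bcarrier (l1_alg :: ('a::semigroup_mult \<Rightarrow> complex) cbalg) = {f. (\<lambda>s. norm (f s)) summable_on UNIV}"
  "badd (l1_alg :: ('a::semigroup_mult \<Rightarrow> complex) cbalg) = (\<lambda>f g s. f s + g s)"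
  "bsmult (l1_alg :: ('a::semigroup_mult \<Rightarrow> complex) cbalg) = (\<lambda>c f s. c * f s)"
  "bmult (l1_alg :: ('a::semigroup_mult \<Rightarrow> complex) cbalg) =
     (\<lambda>f g x. infsum (\<lambda>(s, u). f s * g u) {(s, u). s * u = x})"
  "bnorm (l1_alg :: ('a::semigroup_mult \<Rightarrow> complex) cbalg) = (\<lambda>f. infsum (\<lambda>s. norm (f s)) UNIV)"
  by (simp_all add: l1_alg_def cbalg.defs)

text \<open>The quantifier in \<^const>\<open>super_weakly_amenable\<close> fixes
the element type of the target algebra to a function type, so \<open>\<complex>\<close> is modelled by the constant
functions, whose norm can be read off at any point.\<close>

definition zero_product_line :: "('x \<Rightarrow> complex) cbalg" where
  "zero_product_line = cbalg.make {f. \<exists>c. f = (\<lambda>_. c)} (\<lambda>_. 0) (\<lambda>f g s. f s + g s)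
     (\<lambda>c f s. c * f s) (\<lambda>f g s. 0) (\<lambda>f. cmod (f undefined))"

lemma zero_product_line_simps:
  "bcarrier zero_product_line = {f. \<exists>c. f = (\<lambda>_. c)}"
  "bzero zero_product_line = (\<lambda>_. 0)"
  "badd zero_product_line = (\<lambda>f g s. f s + g s)"
  "bsmult zero_product_line = (\<lambda>c f s. c * f s)"
  "bmult zero_product_line = (\<lambda>f g s. 0)"
  "bnorm zero_product_line = (\<lambda>f. cmod (f undefined))"
  by (simp_all add: zero_product_line_def cbalg.defs)

lemma banach_algebra_zero_product_line: "banach_algebra zero_product_line"
  unfolding banach_algebra_def Let_def zero_product_line_simps
proof (intro conjI allI impI)
  fix X :: "nat \<Rightarrow> 'x \<Rightarrow> complex"
  assume "\<forall>n. X n \<in> {f. \<exists>c. f = (\<lambda>_. c)}"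
    and cauchy: "\<forall>e>0. \<exists>N. \<forall>m\<ge>N. \<forall>n\<ge>N. cmod (X m undefined + - 1 * X n undefined) < e"
  have "Cauchy (\<lambda>n. X n undefined)"
    using cauchy by (intro metric_CauchyI) (auto simp: dist_norm)
  then obtain L where "(\<lambda>n. X n undefined) \<longlonglongrightarrow> L"
    using Cauchy_convergent_iff convergent_def by blast
  then have "\<forall>e>0. \<exists>N. \<forall>n\<ge>N. dist (X n undefined) L < e"
    by (simp add: metric_LIMSEQ_D)
  then have "\<forall>e>0. \<exists>N. \<forall>n\<ge>N. cmod (X n undefined + - 1 * L) < e"
    by (simp add: dist_norm)
  then show "\<exists>L\<in>{f. \<exists>c. f = (\<lambda>_. c)}.
      \<forall>e>0. \<exists>N. \<forall>n\<ge>N. cmod (X n undefined + - 1 * L undefined) < e"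
    by (intro bexI[of _ "\<lambda>_. L"]) auto
qed (auto simp: algebra_simps norm_mult fun_eq_iff norm_triangle_ineq
          intro: exI[of _ "\<lambda>_. - c" for c])

lemma not_super_weakly_amenable_if_annihilating_functional:
  assumes f: "bounded_functional A f"
    and annihilates: "\<And>a b. a \<in> bcarrier A \<Longrightarrow> b \<in> bcarrier A \<Longrightarrow> f (bmult A a b) = 0"
    and u: "u \<in> bcarrier A" "f u \<noteq> 0"
  shows "\<not> super_weakly_amenable TYPE('x \<Rightarrow> complex) A"
proof
  assume swa: "super_weakly_amenable TYPE('x \<Rightarrow> complex) A"
  define \<phi> :: "_ \<Rightarrow> 'x \<Rightarrow> complex" where "\<phi> a = (\<lambda>_. f a)" for a
  define d :: "_ \<Rightarrow> ('x \<Rightarrow> complex) \<Rightarrow> complex" where "d a x = f a * x undefined" for a x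
  obtain K where K: "\<forall>a\<in>bcarrier A. cmod (f a) \<le> K * bnorm A a"
    using f by (auto simp: bounded_functional_def)
  have hom: "cont_hom A zero_product_line \<phi>"
    using f K by (auto simp: cont_hom_def bounded_functional_def zero_product_line_simps
        \<phi>_def annihilates)
  have "dual_derivation A zero_product_line \<phi> d"
    unfolding dual_derivation_def
  proof (intro conjI)
    show "\<exists>K. \<forall>a\<in>bcarrier A. \<forall>x\<in>bcarrier zero_product_line.
            cmod (d a x) \<le> K * bnorm A a * bnorm zero_product_line x"
      using K by (auto simp: zero_product_line_simps d_def norm_mult intro!: mult_right_mono)
  qed (use f in \<open>auto simp: bounded_functional_def zero_product_line_simps d_def \<phi>_def
         annihilates algebra_simps norm_mult intro: exI[of _ "cmod (f a)" for a]\<close>)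
  with swa hom banach_algebra_zero_product_line u(1)
  have "d u (\<phi> u) + d u (\<phi> u) = 0"
    unfolding super_weakly_amenable_def by blast
  with u(2) show False
    by (simp add: d_def \<phi>_def)
qed

definition point_mass :: "'a \<Rightarrow> 'a \<Rightarrow> complex" where
  "point_mass s = (\<lambda>x. if x = s then 1 else 0)"

lemma point_mass_in_l1: "point_mass s \<in> bcarrier (l1_alg :: ('a::semigroup_mult \<Rightarrow> complex) cbalg)"
proof -
  have "(\<lambda>x. norm (point_mass s x)) summable_on {s}"
    by simp
  then have "(\<lambda>x. norm (point_mass s x)) summable_on UNIV"
    by (rule summable_on_cong_neutral[THEN iffD1, rotated -1]) (auto simp: point_mass_def)
  then show ?thesis
    by (simp add: l1_alg_simps)
qed

lemma l1_evaluation_bounded: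
  "bounded_functional (l1_alg :: ('a::semigroup_mult \<Rightarrow> complex) cbalg) (\<lambda>a. a s)"
proof -
  have "cmod (a s) \<le> infsum (\<lambda>x. norm (a x)) UNIV"
    if "(\<lambda>x. norm (a x)) summable_on UNIV" for a :: "'a \<Rightarrow> complex"
  proof -
    have "infsum (\<lambda>x. norm (a x)) {s} \<le> infsum (\<lambda>x. norm (a x)) UNIV"
      by (rule infsum_mono_neutral) (use that in auto)
    then show ?thesis
      by simp
  qed
  then show ?thesis
    by (auto simp: bounded_functional_def l1_alg_simps intro: exI[of _ 1])
qed

theorem l1_not_super_weakly_amenable:
  fixes s :: "'a::semigroup_mult"
  assumes "\<And>u v. u * v \<noteq> s"
  shows "\<not> super_weakly_amenable TYPE('x \<Rightarrow> complex) (l1_alg :: ('a \<Rightarrow> complex) cbalg)"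
proof (rule not_super_weakly_amenable_if_annihilating_functional
    [where f = "\<lambda>a. a s" and u = "point_mass s"])
  have "{(u, v). u * v = s} = {}"
    using assms by auto
  then show "bmult l1_alg a b s = 0" for a b :: "'a \<Rightarrow> complex"
    by (simp add: l1_alg_simps)
  show "point_mass s s \<noteq> 0"
    by (simp add: point_mass_def)
qed (fact l1_evaluation_bounded point_mass_in_l1)+

lemma l1_mult_point_mass:
  "bmult (l1_alg :: ('a::semigroup_mult \<Rightarrow> complex) cbalg) (point_mass s) (point_mass r) =
     point_mass (s * r)"
proof
  fix x
  have "infsum (\<lambda>(u, v). point_mass s u * point_mass r v) {(u, v). u * v = x} =
        infsum (\<lambda>(u, v). point_mass s u * point_mass r v) ({(s, r)} \<inter> {(u, v). u * v = x})"
    by (rule infsum_cong_neutral) (auto simp: point_mass_def split: if_splits)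
  then show "bmult l1_alg (point_mass s) (point_mass r) x = point_mass (s * r) x"
    by (auto simp: l1_alg_simps point_mass_def)
qed

lemma l1_finite_carrier:
  "finite (UNIV :: 'a set) \<Longrightarrow> bcarrier (l1_alg :: ('a::semigroup_mult \<Rightarrow> complex) cbalg) = UNIV"
  by (auto simp: l1_alg_simps)

lemma additive_sum_of_functions:
  assumes "\<And>f g. h (\<lambda>x. f x + g x) = h f + h g" "h (\<lambda>_. 0) = 0"
  shows "h (\<lambda>x. \<Sum>s\<in>A. F s x) = (\<Sum>s\<in>A. h (F s))"
  by (induction A rule: infinite_finite_induct) (simp_all add: assms)

lemma l1_finite_expansion:
  "finite (UNIV :: 'a set) \<Longrightarrow> (\<lambda>x. \<Sum>s\<in>UNIV. a s * point_mass s x) = (a :: 'a \<Rightarrow> complex)"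
  by (simp add: point_mass_def if_distrib cong: if_cong)

lemma dual_derivation_l1_finite_expansion:
  fixes D :: "('a::semigroup_mult \<Rightarrow> complex) \<Rightarrow> ('a \<Rightarrow> complex) \<Rightarrow> complex"
  assumes fin: "finite (UNIV :: 'a set)" and D: "dual_derivation l1_alg l1_alg \<phi> D"
  shows "D a y = (\<Sum>s\<in>UNIV. \<Sum>r\<in>UNIV. a s * y r * D (point_mass s) (point_mass r))"
proof -
  have add: "D (\<lambda>x. f x + g x) y = D f y + D g y"
    and smult: "D (\<lambda>x. c * f x) y = c * D f y"
    and functional: "bounded_functional l1_alg (D f)" for f g c y
    using D by (auto simp: dual_derivation_def l1_finite_carrier[OF fin] l1_alg_simps(2,3))
  have zero: "D (\<lambda>_. 0) y = 0" for y
    using smult[of 0] by simp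
  have add_right: "D f (\<lambda>x. g x + h x) = D f g + D f h"
    and smult_right: "D f (\<lambda>x. c * g x) = c * D f g" for f g h c
    using functional[of f]
    by (auto simp: bounded_functional_def l1_finite_carrier[OF fin] l1_alg_simps(2,3))
  have zero_right: "D f (\<lambda>_. 0) = 0" for f
    using smult_right[of f 0] by simp
  have expand_right: "D f y = (\<Sum>r\<in>UNIV. y r * D f (point_mass r))" for f
    using additive_sum_of_functions[of "D f" "\<lambda>r x. y r * point_mass r x" UNIV]
    by (simp add: add_right zero_right smult_right l1_finite_expansion[OF fin])
  have "D a y = (\<Sum>s\<in>UNIV. a s * D (point_mass s) y)"
    using additive_sum_of_functions[of "\<lambda>f. D f y" "\<lambda>s x. a s * point_mass s x" UNIV]
    by (simp add: add zero smult l1_finite_expansion[OF fin])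
  also have "\<dots> = (\<Sum>s\<in>UNIV. \<Sum>r\<in>UNIV. a s * y r * D (point_mass s) (point_mass r))"
    by (simp add: expand_right sum_distrib_left mult.assoc)
  finally show ?thesis .
qed

theorem l1_two_point_null_semigroup_semiweakly_amenable:
  fixes t z :: "'a::semigroup_mult"
  assumes UNIV: "(UNIV :: 'a set) = {t, z}" and null: "\<And>x y. x * y = z"
  shows "semiweakly_amenable (l1_alg :: ('a \<Rightarrow> complex) cbalg)"
  unfolding semiweakly_amenable_def
proof (intro allI impI)
  fix D :: "('a \<Rightarrow> complex) \<Rightarrow> ('a \<Rightarrow> complex) \<Rightarrow> complex"
  assume D: "dual_derivation l1_alg l1_alg id D"
    and skew: "\<forall>a\<in>bcarrier l1_alg. \<forall>b\<in>bcarrier l1_alg. D a b + D b a = 0"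
  have fin: "finite (UNIV :: 'a set)"
    by (simp add: UNIV)
  have products: "bmult l1_alg (point_mass x) (point_mass y) = point_mass z" for x y
    by (simp add: l1_mult_point_mass null)
  have diagonal: "D (point_mass x) (point_mass x) = 0" for x
  proof -
    have "D (point_mass x) (point_mass x) + D (point_mass x) (point_mass x) = 0"
      using skew point_mass_in_l1[of x] by blast
    then show ?thesis
      by (simp flip: mult_2)
  qed
  have leibniz: "D (bmult l1_alg a b) x = D a (bmult l1_alg b x) + D b (bmult l1_alg x a)"
    if "a \<in> bcarrier l1_alg" "b \<in> bcarrier l1_alg" "x \<in> bcarrier l1_alg" for a b x
    using D that unfolding dual_derivation_def by simp
  have tz: "D (point_mass t) (point_mass z) = 0"
    using leibniz[OF point_mass_in_l1 point_mass_in_l1 point_mass_in_l1, of t t z]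
    by (simp add: products diagonal)
  have "D (point_mass t) (point_mass z) + D (point_mass z) (point_mass t) = 0"
    using skew point_mass_in_l1 by blast
  with tz have zt: "D (point_mass z) (point_mass t) = 0"
    by simp
  have vanishes: "D (point_mass s) (point_mass r) = 0" for s r
  proof -
    have "s \<in> {t, z}" "r \<in> {t, z}"
      using UNIV by auto
    then show ?thesis
      using diagonal tz zt by auto
  qed
  have "D a y = 0" for a y
    by (subst dual_derivation_l1_finite_expansion[OF fin D]) (simp add: vanishes)
  then show "\<exists>F. bounded_functional l1_alg F \<and>
      (\<forall>a\<in>bcarrier l1_alg. \<forall>y\<in>bcarrier l1_alg. D a y = F (bmult l1_alg y a) - F (bmult l1_alg a y))"
    by (intro exI[of _ "\<lambda>_. 0"]) (auto simp: bounded_functional_def intro: exI[of _ 0])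
qed

theorem mainTheorem13:
  fixes t z :: "'a::semigroup_mult"
  shows "({s * u | s u. True} \<noteq> (UNIV :: 'c::semigroup_mult set) \<longrightarrow>
           \<not> super_weakly_amenable TYPE('c \<Rightarrow> complex) (l1_alg :: ('c \<Rightarrow> complex) cbalg))
       \<and> ((UNIV :: 'a set) = {t, z} \<and> t \<noteq> z \<and> (\<forall>x y :: 'a. x * y = z) \<longrightarrow>
           semiweakly_amenable (l1_alg :: ('a \<Rightarrow> complex) cbalg) \<and>
           \<not> super_weakly_amenable TYPE('a \<Rightarrow> complex) (l1_alg :: ('a \<Rightarrow> complex) cbalg))"
proof (intro conjI impI)
  assume "{s * u | s u. True} \<noteq> (UNIV :: 'c set)"
  then obtain s :: 'c where "s \<notin> {s * u | s u. True}"
    by blast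
  then have "\<And>u v. u * v \<noteq> s"
    by blast
  then show "\<not> super_weakly_amenable TYPE('c \<Rightarrow> complex) (l1_alg :: ('c \<Rightarrow> complex) cbalg)"
    by (rule l1_not_super_weakly_amenable)
next
  assume S: "(UNIV :: 'a set) = {t, z} \<and> t \<noteq> z \<and> (\<forall>x y :: 'a. x * y = z)"
  then show "semiweakly_amenable (l1_alg :: ('a \<Rightarrow> complex) cbalg)"
    by (intro l1_two_point_null_semigroup_semiweakly_amenable) auto
  from S have "\<And>u v. u * v \<noteq> t"
    by auto
  then show "\<not> super_weakly_amenable TYPE('a \<Rightarrow> complex) (l1_alg :: ('a \<Rightarrow> complex) cbalg)"
    by (rule l1_not_super_weakly_amenable)
qed

end
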